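(* Let $N$ be an odd prime, $V=\mathbb{Z}_N\times\mathbb{Z}_N$, and let $X=\{v_1,\dots,v_r\}\subset V$ be a set of $r$ points. Choose at random three (pairwise distinct) lines $L,M,M^\circ\subset V$, and assume that $X$ is generic with respect to each of $L$, $M$ and $M^\circ$. Then the probability $P$ that $X$ is perfect with respect to $L,M,M^\circ$ satisfies $$P\ge 1-\frac{r(r^2-r)}{N}.$$
   Context: A line in $V$ means a subset through $(0,0)$ of the form $\{(\tau,a\tau):\tau\in\mathbb{Z}_N\}$, $a\in\mathbb{Z}_N$, or $\{(0,\omega):\omega\in\mathbb{Z}_N\}$ ($N+1$ lines in total); a shifted line is a set $L+v$ with $L$ a line and $v\in V$. A set $X\subset V$ is generic with respect to a line $L$ if $u-v\notin L$ for all distinct $u,v\in X$. For a family $\mathcal{F}$ of shifted lines, a point $v\in V$ is an incidence point of $\mathcal{F}$ if it lies on at least two shifted lines of $\mathcal{F}$, and its incidence number is the number of shifted lines of $\mathcal{F}$ containing it. A collection $v_1,\dots,v_r$ is perfect with respect to lines $L_1,\dots,L_d$ if $v_1,\dots,v_r$ are the only incidence points of $\mathcal{F}=\{v_i+L_j:1\le i\le r,\,1\le j\le d\}$ with incidence number $d$. The probability is over the random choice of the lines, given the genericity assumption. *)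

theory Defs
  imports Complex_Main "HOL-Computational_Algebra.Primes"
begin

text \<open>Z_N is represented by the residues {0..<N} (as integers), V = Z_N x Z_N.\<close>

definition Vsp :: "nat \<Rightarrow> (int \<times> int) set" where
  "Vsp N = {0..<int N} \<times> {0..<int N}"

definition vadd :: "nat \<Rightarrow> int \<times> int \<Rightarrow> int \<times> int \<Rightarrow> int \<times> int" where
  "vadd N u v = ((fst u + fst v) mod int N, (snd u + snd v) mod int N)"

definition vsub :: "nat \<Rightarrow> int \<times> int \<Rightarrow> int \<times> int \<Rightarrow> int \<times> int" where
  "vsub N u v = ((fst u - fst v) mod int N, (snd u - snd v) mod int N)"

definition slope_line :: "nat \<Rightarrow> int \<Rightarrow> (int \<times> int) set" where
  "slope_line N a = {(t, (a * t) mod int N) | t. t \<in> {0..<int N}}"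

definition vert_line :: "nat \<Rightarrow> (int \<times> int) set" where
  "vert_line N = {(0, w) | w. w \<in> {0..<int N}}"

definition lines :: "nat \<Rightarrow> (int \<times> int) set set" where
  "lines N = slope_line N ` {0..<int N} \<union> {vert_line N}"

definition shift :: "nat \<Rightarrow> (int \<times> int) set \<Rightarrow> int \<times> int \<Rightarrow> (int \<times> int) set" where
  "shift N L v = (\<lambda>x. vadd N x v) ` L"

definition generic :: "nat \<Rightarrow> (int \<times> int) set \<Rightarrow> (int \<times> int) set \<Rightarrow> bool" where
  "generic N X L \<longleftrightarrow> (\<forall>u\<in>X. \<forall>v\<in>X. u \<noteq> v \<longrightarrow> vsub N u v \<notin> L)"

definition family :: "nat \<Rightarrow> (int \<times> int) set \<Rightarrow> (int \<times> int) set set \<Rightarrow> (int \<times> int) set set" where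
  "family N X Ls = {shift N L v | v L. v \<in> X \<and> L \<in> Ls}"

definition incidence_number :: "(int \<times> int) set set \<Rightarrow> int \<times> int \<Rightarrow> nat" where
  "incidence_number F p = card {l \<in> F. p \<in> l}"

definition incidence_point :: "nat \<Rightarrow> (int \<times> int) set set \<Rightarrow> int \<times> int \<Rightarrow> bool" where
  "incidence_point N F p \<longleftrightarrow> p \<in> Vsp N \<and> 2 \<le> incidence_number F p"

definition perfect :: "nat \<Rightarrow> (int \<times> int) set \<Rightarrow> (int \<times> int) set set \<Rightarrow> bool" where
  "perfect N X Ls \<longleftrightarrow>
     {p. incidence_point N (family N X Ls) p \<and> incidence_number (family N X Ls) p = card Ls} = X"

text \<open>Sample space: ordered triples of pairwise distinct lines w.r.t. which X is generic
  (uniform distribution, conditioned on genericity).\<close>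
definition generic_triples :: "nat \<Rightarrow> (int \<times> int) set \<Rightarrow>
    ((int \<times> int) set \<times> (int \<times> int) set \<times> (int \<times> int) set) set" where
  "generic_triples N X = {(L, M, M'). L \<in> lines N \<and> M \<in> lines N \<and> M' \<in> lines N \<and>
      L \<noteq> M \<and> L \<noteq> M' \<and> M \<noteq> M' \<and> generic N X L \<and> generic N X M \<and> generic N X M'}"

definition perfect_prob :: "nat \<Rightarrow> (int \<times> int) set \<Rightarrow> real" where
  "perfect_prob N X =
     real (card {(L, M, M') \<in> generic_triples N X. perfect N X {L, M, M'}})
     / real (card (generic_triples N X))"

end

theory Submission
  imports Defs
begin

text \<open>Two shifted lines with distinct directions meet in at most one point, and genericity
  makes the shifted lines through a point of \<open>X\<close> the only members of the family through it.
  Hence a generic triple \<open>(L, M, M')\<close> is imperfect only if some \<open>p \<notin> X\<close> lies on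
  \<open>a + L\<close>, \<open>b + M\<close> and \<open>c + M'\<close> for distinct \<open>a, b, c \<in> X\<close>; since \<open>p\<close>, and then \<open>M'\<close>, is
  determined by \<open>(L, M, a, b, c)\<close>, at most \<open>g(g-1) r(r-1)(r-2)\<close> of the \<open>g(g-1)(g-2)\<close>
  generic triples are imperfect. Each pair of points of \<open>X\<close> rules out only one line, so
  \<open>g \<ge> N + 1 - r(r-1)\<close>, and the resulting ratio is at most \<open>r(r\<^sup>2-r)/N\<close>.\<close>

section \<open>Lines as congruences\<close>

text \<open>Lines are indexed by \<open>k \<in> {0..N}\<close>, the index \<open>N\<close> standing for the vertical line;
  \<open>in_dir N k d1 d2\<close> says that the integer vector \<open>(d1, d2)\<close> reduces mod \<open>N\<close> to a point
  of \<open>line_of N k\<close>.\<close>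

definition line_of :: "nat \<Rightarrow> int \<Rightarrow> (int \<times> int) set" where
  "line_of N k = (if k < int N then slope_line N k else vert_line N)"

definition in_dir :: "nat \<Rightarrow> int \<Rightarrow> int \<Rightarrow> int \<Rightarrow> bool" where
  "in_dir N k d1 d2 \<longleftrightarrow> (if k < int N then int N dvd d2 - k * d1 else int N dvd d1)"

lemma lines_eq_line_of: "lines N = line_of N ` {0..int N}"
proof -
  have "{0..int N} = {0..<int N} \<union> {int N}" by auto
  then show ?thesis unfolding lines_def line_of_def by (auto simp: image_iff)
qed

lemma finite_lines: "finite (lines N)"
  unfolding lines_eq_line_of by simp

lemma in_dir_add:
  assumes "in_dir N k a1 a2" "in_dir N k b1 b2" shows "in_dir N k (a1 + b1) (a2 + b2)"
proof (cases "k < int N")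
  case True
  have eq: "(a2 + b2) - k * (a1 + b1) = (a2 - k * a1) + (b2 - k * b1)" by (simp add: algebra_simps)
  have "int N dvd (a2 - k * a1) + (b2 - k * b1)"
    using assms True unfolding in_dir_def by (intro dvd_add) auto
  then show ?thesis using True unfolding in_dir_def eq by simp
next
  case False
  then show ?thesis using assms unfolding in_dir_def by (simp add: dvd_add)
qed

lemma in_dir_uminus: "in_dir N k a1 a2 \<Longrightarrow> in_dir N k (- a1) (- a2)"
  unfolding in_dir_def by (auto simp: dvd_diff_commute)

lemma in_dir_distinct_dvd:
  assumes "prime N" "k \<in> {0..int N}" "k' \<in> {0..int N}" "k \<noteq> k'"
    and "in_dir N k d1 d2" "in_dir N k' d1 d2"
  shows "int N dvd d1 \<and> int N dvd d2"
proof -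
  have d1: "int N dvd d1"
  proof (cases "k < int N \<and> k' < int N")
    case True
    then have "int N dvd d2 - k * d1" "int N dvd d2 - k' * d1"
      using assms(5,6) unfolding in_dir_def by auto
    then have "int N dvd (d2 - k' * d1) - (d2 - k * d1)" by (rule dvd_diff[rotated])
    moreover have "(d2 - k' * d1) - (d2 - k * d1) = (k - k') * d1" by (simp add: algebra_simps)
    ultimately have "int N dvd (k - k') * d1" by simp
    moreover have "\<not> int N dvd k - k'"
    proof
      assume "int N dvd k - k'"
      moreover have "k - k' \<noteq> 0" "\<bar>k - k'\<bar> < int N" using True assms(2-4) by auto
      ultimately show False using dvd_imp_le_int[of "k - k'" "int N"] by auto
    qed
    ultimately show ?thesis using assms(1) prime_dvd_mult_iff[of "int N"] by auto
  next
    case False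
    then show ?thesis using assms(2-6) unfolding in_dir_def by (auto split: if_splits)
  qed
  have "k < int N \<or> k' < int N" using assms(2-4) by auto
  then have "int N dvd d2 - k * d1 \<or> int N dvd d2 - k' * d1"
    using assms(5,6) unfolding in_dir_def by auto
  then have "int N dvd d2" using d1 by (metis diff_add_cancel dvd_add dvd_mult)
  with d1 show ?thesis ..
qed

lemma vsub_mem_line_of_iff:
  assumes "N > 0" "k \<in> {0..int N}"
  shows "vsub N u v \<in> line_of N k \<longleftrightarrow> in_dir N k (fst u - fst v) (snd u - snd v)"
proof (cases "k < int N")
  case True
  let ?a = "fst u - fst v" and ?b = "snd u - snd v"
  have "vsub N u v \<in> line_of N k \<longleftrightarrow> ?b mod int N = (k * (?a mod int N)) mod int N"
    using True assms unfolding vsub_def line_of_def slope_line_def by auto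
  also have "\<dots> \<longleftrightarrow> int N dvd ?b - k * ?a" by (simp add: mod_mult_right_eq mod_eq_dvd_iff)
  finally show ?thesis using True unfolding in_dir_def by simp
next
  case False
  then show ?thesis using assms unfolding vsub_def line_of_def vert_line_def in_dir_def
    by (auto simp: dvd_eq_mod_eq_0)
qed

lemma lines_obtain_dir:
  assumes "N > 0" "L \<in> lines N"
  obtains k where "k \<in> {0..int N}" "L = line_of N k"
    "\<And>u v. vsub N u v \<in> L \<longleftrightarrow> in_dir N k (fst u - fst v) (snd u - snd v)"
  using assms vsub_mem_line_of_iff unfolding lines_eq_line_of by blast

lemma Vsp_eqI:
  assumes "p \<in> Vsp N" "q \<in> Vsp N" "int N dvd fst p - fst q" "int N dvd snd p - snd q"
  shows "p = q"
proof -
  have "fst p mod int N = fst q mod int N" "snd p mod int N = snd q mod int N"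
    using assms(3,4) by (simp_all add: mod_eq_dvd_iff)
  then show ?thesis using assms(1,2) unfolding Vsp_def by (auto simp: prod_eq_iff)
qed

lemma finite_Vsp: "finite (Vsp N)"
  unfolding Vsp_def by auto

lemma lines_subset_Vsp: "N > 0 \<Longrightarrow> L \<in> lines N \<Longrightarrow> L \<subseteq> Vsp N"
  unfolding lines_def slope_line_def vert_line_def Vsp_def by auto

lemma vsub_self_mem_lines:
  assumes "N > 0" "L \<in> lines N" shows "vsub N p p \<in> L"
proof -
  have "vsub N p p = (0, 0)" unfolding vsub_def by simp
  moreover have "(0, 0) \<in> L" using assms unfolding lines_def slope_line_def vert_line_def by auto
  ultimately show ?thesis by simp
qed

lemma vsub_mem_lines_sym:
  assumes "N > 0" "L \<in> lines N" "vsub N p q \<in> L" shows "vsub N q p \<in> L"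
proof -
  obtain k where k: "\<And>u v. vsub N u v \<in> L \<longleftrightarrow> in_dir N k (fst u - fst v) (snd u - snd v)"
    using lines_obtain_dir[OF assms(1,2)] by metis
  have "in_dir N k (fst p - fst q) (snd p - snd q)" using assms(3) k[of p q] by blast
  from in_dir_uminus[OF this] have "in_dir N k (fst q - fst p) (snd q - snd p)" by simp
  then show ?thesis using k[of q p] by blast
qed

lemma vsub_mem_lines_trans:
  assumes "N > 0" "L \<in> lines N" "vsub N p q \<in> L" "vsub N q s \<in> L" shows "vsub N p s \<in> L"
proof -
  obtain k where k: "\<And>u v. vsub N u v \<in> L \<longleftrightarrow> in_dir N k (fst u - fst v) (snd u - snd v)"
    using lines_obtain_dir[OF assms(1,2)] by metis
  have "in_dir N k (fst p - fst q) (snd p - snd q)" "in_dir N k (fst q - fst s) (snd q - snd s)"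
    using assms(3,4) k[of p q] k[of q s] by blast+
  from in_dir_add[OF this] have "in_dir N k (fst p - fst s) (snd p - snd s)" by simp
  then show ?thesis using k[of p s] by blast
qed

lemma vsub_mem_distinct_lines:
  assumes "prime N" "L \<in> lines N" "M \<in> lines N" "L \<noteq> M" "p \<in> Vsp N" "q \<in> Vsp N"
    and "vsub N p q \<in> L" "vsub N p q \<in> M"
  shows "p = q"
proof -
  have N: "N > 0" using assms(1) prime_gt_0_nat by blast
  obtain k where k: "k \<in> {0..int N}" "L = line_of N k"
    "\<And>u v. vsub N u v \<in> L \<longleftrightarrow> in_dir N k (fst u - fst v) (snd u - snd v)"
    using lines_obtain_dir[OF N assms(2)] by metis
  obtain k' where k': "k' \<in> {0..int N}" "M = line_of N k'"
    "\<And>u v. vsub N u v \<in> M \<longleftrightarrow> in_dir N k' (fst u - fst v) (snd u - snd v)"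
    using lines_obtain_dir[OF N assms(3)] by metis
  have "k \<noteq> k'" using assms(4) k(2) k'(2) by blast
  moreover have "in_dir N k (fst p - fst q) (snd p - snd q)" "in_dir N k' (fst p - fst q) (snd p - snd q)"
    using assms(7,8) k(3)[of p q] k'(3)[of p q] by blast+
  ultimately have "int N dvd fst p - fst q \<and> int N dvd snd p - snd q"
    by (rule in_dir_distinct_dvd[OF assms(1) k(1) k'(1)])
  then show ?thesis using Vsp_eqI[OF assms(5,6)] by blast
qed

lemma vadd_mem_Vsp: "N > 0 \<Longrightarrow> vadd N x v \<in> Vsp N"
  unfolding vadd_def Vsp_def by auto

lemma vsub_vadd: assumes "x \<in> Vsp N" shows "vsub N (vadd N x v) v = x"
proof -
  have "((a + b) mod int N - b) mod int N = a mod int N" for a b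
    by (metis add_diff_cancel_right' mod_diff_left_eq)
  then show ?thesis using assms unfolding vsub_def vadd_def Vsp_def by (cases x) auto
qed

lemma vadd_vsub: assumes "p \<in> Vsp N" shows "vadd N (vsub N p v) v = p"
proof -
  have "((a - b) mod int N + b) mod int N = a mod int N" for a b
    by (metis diff_add_cancel mod_add_left_eq)
  then show ?thesis using assms unfolding vsub_def vadd_def Vsp_def by (cases p) auto
qed

lemma mem_shift_iff:
  assumes "N > 0" "L \<in> lines N"
  shows "p \<in> shift N L v \<longleftrightarrow> p \<in> Vsp N \<and> vsub N p v \<in> L"
proof
  assume "p \<in> shift N L v"
  then obtain x where x: "x \<in> L" "p = vadd N x v" unfolding shift_def by auto
  then have "vsub N p v = x" using lines_subset_Vsp[OF assms] vsub_vadd by blast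
  then show "p \<in> Vsp N \<and> vsub N p v \<in> L" using x vadd_mem_Vsp[OF assms(1)] by simp
next
  assume "p \<in> Vsp N \<and> vsub N p v \<in> L"
  then show "p \<in> shift N L v" unfolding shift_def using vadd_vsub by (metis image_eqI)
qed

lemma mem_shift_self: "N > 0 \<Longrightarrow> L \<in> lines N \<Longrightarrow> v \<in> Vsp N \<Longrightarrow> v \<in> shift N L v"
  using mem_shift_iff vsub_self_mem_lines by blast

lemma shift_inj_lines:
  assumes "N > 0" "L \<in> lines N" "M \<in> lines N" "shift N L v = shift N M v"
  shows "L = M"
proof -
  have "x \<in> L \<longleftrightarrow> x \<in> M" if "x \<in> Vsp N" for x
    using mem_shift_iff[OF assms(1,2), of "vadd N x v" v] mem_shift_iff[OF assms(1,3), of "vadd N x v" v]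
      assms(4) vsub_vadd[OF that] vadd_mem_Vsp[OF assms(1)] by auto
  then show ?thesis using lines_subset_Vsp[OF assms(1)] assms(2,3) by blast
qed

lemma shift_distinct_lines_inter:
  assumes "prime N" "L \<in> lines N" "M \<in> lines N" "L \<noteq> M"
    and "p \<in> shift N L a" "p \<in> shift N M b" "q \<in> shift N L a" "q \<in> shift N M b"
  shows "p = q"
proof -
  have N: "N > 0" using assms(1) prime_gt_0_nat by blast
  have "vsub N p q \<in> K" if "K \<in> lines N" "p \<in> shift N K c" "q \<in> shift N K c" for K c
    using that mem_shift_iff[OF N] vsub_mem_lines_sym[OF N] vsub_mem_lines_trans[OF N] by meson
  then show ?thesis
    using vsub_mem_distinct_lines[OF assms(1-4)] assms(2,3,5-8) mem_shift_iff[OF N] by meson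
qed

lemma shift_distinct_lines_inter_base:
  assumes "prime N" "L \<in> lines N" "M \<in> lines N" "L \<noteq> M" "c \<in> Vsp N"
    and "p \<in> shift N L c" "p \<in> shift N M c"
  shows "p = c"
  using shift_distinct_lines_inter[OF assms(1-4,6,7)] mem_shift_self assms(1-3,5)
  by (simp add: prime_gt_0_nat)

lemma generic_mem_shift:
  assumes "N > 0" "L \<in> lines N" "generic N X L" "v \<in> X" "w \<in> X" "v \<in> shift N L w"
  shows "v = w"
  using assms mem_shift_iff unfolding generic_def by blast

lemma generic_shift_inter:
  assumes "N > 0" "L \<in> lines N" "generic N X L" "a \<in> X" "b \<in> X"
    and "p \<in> shift N L a" "p \<in> shift N L b"
  shows "a = b"
proof -
  have "vsub N a b \<in> L"
    using assms(6,7) mem_shift_iff[OF assms(1,2)]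
      vsub_mem_lines_sym[OF assms(1,2)] vsub_mem_lines_trans[OF assms(1,2)] by meson
  then show ?thesis using assms(3-5) unfolding generic_def by blast
qed

section \<open>Incidences of the family\<close>

lemma incidence_number_family_mem:
  assumes "N > 0" "X \<subseteq> Vsp N" "Ls \<subseteq> lines N" "\<forall>L\<in>Ls. generic N X L" "v \<in> X"
  shows "incidence_number (family N X Ls) v = card Ls"
proof -
  have "{l \<in> family N X Ls. v \<in> l} = (\<lambda>L. shift N L v) ` Ls"
  proof (intro equalityI subsetI)
    fix l assume "l \<in> {l \<in> family N X Ls. v \<in> l}"
    then obtain w L where "w \<in> X" "L \<in> Ls" "l = shift N L w" "v \<in> l"
      unfolding family_def by blast
    moreover from this have "v = w" using generic_mem_shift[OF assms(1)] assms(3-5) by blast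
    ultimately show "l \<in> (\<lambda>L. shift N L v) ` Ls" by blast
  next
    fix l assume "l \<in> (\<lambda>L. shift N L v) ` Ls"
    then obtain L where "L \<in> Ls" "l = shift N L v" by blast
    moreover from this have "v \<in> l" using mem_shift_self[OF assms(1)] assms(2,3,5) by blast
    ultimately show "l \<in> {l \<in> family N X Ls. v \<in> l}" using assms(5) unfolding family_def by blast
  qed
  moreover have "inj_on (\<lambda>L. shift N L v) Ls"
    using shift_inj_lines[OF assms(1)] assms(3) by (meson inj_onI subsetD)
  ultimately show ?thesis unfolding incidence_number_def by (simp add: card_image)
qed

lemma incidence_number_family_eq_card:
  assumes "N > 0" "Ls \<subseteq> lines N" "\<forall>L\<in>Ls. generic N X L" "finite Ls"
    and "incidence_number (family N X Ls) p = card Ls"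
  shows "\<forall>L\<in>Ls. \<exists>w\<in>X. p \<in> shift N L w"
proof -
  define Ls' where "Ls' = {L\<in>Ls. \<exists>w\<in>X. p \<in> shift N L w}"
  define base where "base L = (SOME w. w \<in> X \<and> p \<in> shift N L w)" for L
  have cover: "{l \<in> family N X Ls. p \<in> l} \<subseteq> (\<lambda>L. shift N L (base L)) ` Ls'"
  proof
    fix l assume "l \<in> {l \<in> family N X Ls. p \<in> l}"
    then obtain w L where wL: "w \<in> X" "L \<in> Ls" "l = shift N L w" "p \<in> l"
      unfolding family_def by blast
    then have "w \<in> X \<and> p \<in> shift N L w" by blast
    then have "base L \<in> X \<and> p \<in> shift N L (base L)" unfolding base_def by (rule someI)
    then have "base L = w" using generic_shift_inter[OF assms(1)] wL assms(2,3) by blast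
    moreover have "L \<in> Ls'" unfolding Ls'_def using wL by blast
    ultimately show "l \<in> (\<lambda>L. shift N L (base L)) ` Ls'" using wL by blast
  qed
  have "finite Ls'" using assms(4) unfolding Ls'_def by simp
  have "card Ls = card {l \<in> family N X Ls. p \<in> l}"
    using assms(5) unfolding incidence_number_def by simp
  also have "\<dots> \<le> card ((\<lambda>L. shift N L (base L)) ` Ls')"
    by (rule card_mono[OF finite_imageI[OF \<open>finite Ls'\<close>] cover])
  also have "\<dots> \<le> card Ls'" by (rule card_image_le[OF \<open>finite Ls'\<close>])
  finally have "card Ls \<le> card Ls'" .
  moreover have "Ls' \<subseteq> Ls" unfolding Ls'_def by blast
  ultimately have "Ls' = Ls" using card_seteq[OF assms(4)] by blast
  then show ?thesis unfolding Ls'_def by blast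
qed

text \<open>Points of \<open>X\<close> always have full incidence, so imperfection means an extra point of full
  incidence.\<close>

lemma imperfect_witness:
  assumes "prime N" "X \<subseteq> Vsp N" "L \<in> lines N" "M \<in> lines N" "M' \<in> lines N"
    and "L \<noteq> M" "L \<noteq> M'" "M \<noteq> M'" "generic N X L" "generic N X M" "generic N X M'"
    and "\<not> perfect N X {L, M, M'}"
  obtains a b c p where "a \<in> X" "b \<in> X" "c \<in> X" "a \<noteq> b" "a \<noteq> c" "b \<noteq> c" "p \<notin> X"
    "p \<in> shift N L a" "p \<in> shift N M b" "p \<in> shift N M' c"
proof -
  have N: "N > 0" using assms(1) prime_gt_0_nat by blast
  define Ls where "Ls = {L, M, M'}"
  have Ls: "card Ls = 3" "finite Ls" "Ls \<subseteq> lines N" "\<forall>L\<in>Ls. generic N X L"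
    unfolding Ls_def using assms(3-11) by auto
  define S where "S = {p. incidence_point N (family N X Ls) p \<and> incidence_number (family N X Ls) p = card Ls}"
  have "X \<subseteq> S"
    using incidence_number_family_mem[OF N assms(2) Ls(3,4)] Ls(1) assms(2)
    unfolding S_def incidence_point_def by auto
  moreover have "S \<noteq> X" using assms(12) unfolding perfect_def S_def Ls_def by simp
  ultimately obtain p where p: "p \<in> S" "p \<notin> X" by blast
  then have "\<forall>K\<in>Ls. \<exists>w\<in>X. p \<in> shift N K w"
    using incidence_number_family_eq_card[OF N Ls(3,4,2)] unfolding S_def by blast
  then obtain a b c where abc: "a \<in> X" "b \<in> X" "c \<in> X"
    "p \<in> shift N L a" "p \<in> shift N M b" "p \<in> shift N M' c"
    unfolding Ls_def by blast
  have distinct: "x \<noteq> y" if "K \<in> lines N" "K' \<in> lines N" "K \<noteq> K'" "x \<in> X" "y \<in> X"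
    "p \<in> shift N K x" "p \<in> shift N K' y" for K K' x y
    using shift_distinct_lines_inter_base[OF assms(1) that(1-3)] that(4-7) p(2) assms(2) by blast
  have "a \<noteq> b" by (rule distinct[OF assms(3,4,6) abc(1,2,4,5)])
  moreover have "a \<noteq> c" by (rule distinct[OF assms(3,5,7) abc(1,3,4,6)])
  moreover have "b \<noteq> c" by (rule distinct[OF assms(4,5,8) abc(2,3,5,6)])
  ultimately show ?thesis using abc p(2) by (intro that)
qed

lemma imperfect_third_line_unique:
  assumes "prime N" "X \<subseteq> Vsp N" "L \<in> lines N" "M \<in> lines N" "L \<noteq> M"
    and "K \<in> lines N" "K' \<in> lines N" "c \<in> X" "p \<notin> X"
    and "p \<in> shift N L a" "p \<in> shift N M b" "p \<in> shift N K c"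
    and "q \<in> shift N L a" "q \<in> shift N M b" "q \<in> shift N K' c"
  shows "K' = K"
proof (rule ccontr)
  assume "K' \<noteq> K"
  have "q = p" using shift_distinct_lines_inter[OF assms(1,3-5,13,14,10,11)] .
  then have "p = c"
    using shift_distinct_lines_inter_base[OF assms(1,7,6) \<open>K' \<noteq> K\<close>] assms(2,8,12,15) by blast
  then show False using assms(8,9) by simp
qed

section \<open>Counting\<close>

lemma card_Sigma_distinct_pairs:
  assumes "finite A" shows "card (SIGMA a:A. A - {a}) = card A * (card A - 1)"
proof -
  have "card (SIGMA a:A. A - {a}) = (\<Sum>a\<in>A. card (A - {a}))"
    using assms by (simp add: card_SigmaI)
  also have "\<dots> = (\<Sum>a\<in>A. card A - 1)" using assms by (intro sum.cong) auto
  finally show ?thesis by simp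
qed

lemma card_Sigma_distinct_triples:
  assumes "finite A"
  shows "card (SIGMA a:A. SIGMA b:A - {a}. A - {a, b}) = card A * ((card A - 1) * (card A - 2))"
proof -
  have "card (SIGMA b:A - {a}. A - {a, b}) = (card A - 1) * (card A - 2)" if "a \<in> A" for a
  proof -
    have "card (SIGMA b:A - {a}. A - {a, b}) = (\<Sum>b\<in>A - {a}. card (A - {a, b}))"
      using assms by (simp add: card_SigmaI)
    also have "\<dots> = (\<Sum>b\<in>A - {a}. card A - 2)"
      using assms that by (intro sum.cong) (auto simp: card_Diff_subset)
    finally show ?thesis using assms that by simp
  qed
  then have "card (SIGMA a:A. SIGMA b:A - {a}. A - {a, b}) = (\<Sum>a\<in>A. (card A - 1) * (card A - 2))"
    using assms by (simp add: card_SigmaI)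
  then show ?thesis by simp
qed

lemma line_of_inj:
  assumes "prime N" "k \<in> {0..int N}" "k' \<in> {0..int N}" "line_of N k = line_of N k'"
  shows "k = k'"
proof (rule ccontr)
  assume "k \<noteq> k'"
  have N: "N > 1" using assms(1) prime_gt_1_nat by blast
  define x where "x = (if k < int N then (1 :: int, k) else (0, 1))"
  have "vsub N x (0, 0) = x" unfolding x_def vsub_def using N assms(2) by auto
  moreover have "in_dir N k (fst x - 0) (snd x - 0)" unfolding x_def in_dir_def by auto
  ultimately have "x \<in> line_of N k" using vsub_mem_line_of_iff[OF _ assms(2), of x "(0, 0)"] N by simp
  then have "in_dir N k' (fst x - 0) (snd x - 0)"
    using vsub_mem_line_of_iff[OF _ assms(3), of x "(0, 0)"] assms(4) \<open>vsub N x (0, 0) = x\<close> N by simp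
  then have "int N dvd fst x \<and> int N dvd snd x"
    using in_dir_distinct_dvd[OF assms(1-3) \<open>k \<noteq> k'\<close>] \<open>in_dir N k (fst x - 0) (snd x - 0)\<close> by simp
  then show False using N unfolding x_def by (auto split: if_splits)
qed

lemma card_lines: "prime N \<Longrightarrow> card (lines N) = N + 1"
  unfolding lines_eq_line_of using line_of_inj by (subst card_image) (auto intro: inj_onI)

text \<open>Each ordered pair of distinct points of \<open>X\<close> makes at most one line non-generic,
  since distinct lines share only the origin.\<close>

lemma card_nongeneric_lines_le:
  assumes "prime N" "X \<subseteq> Vsp N" "finite X"
  shows "card {L \<in> lines N. \<not> generic N X L} \<le> card X * (card X - 1)"
proof -
  define line_through where
    "line_through uv = (SOME L. L \<in> lines N \<and> vsub N (fst uv) (snd uv) \<in> L)" for uv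
  have "{L \<in> lines N. \<not> generic N X L} \<subseteq> line_through ` (SIGMA u:X. X - {u})"
  proof
    fix L assume "L \<in> {L \<in> lines N. \<not> generic N X L}"
    then obtain u v where uv: "L \<in> lines N" "u \<in> X" "v \<in> X" "u \<noteq> v" "vsub N u v \<in> L"
      unfolding generic_def by blast
    then have "L \<in> lines N \<and> vsub N u v \<in> L" by blast
    then have L': "line_through (u, v) \<in> lines N \<and> vsub N u v \<in> line_through (u, v)"
      unfolding line_through_def fst_conv snd_conv by (rule someI)
    have "line_through (u, v) = L"
      using vsub_mem_distinct_lines[OF assms(1) _ uv(1) _ _ _ _ uv(5)] L' uv(2-4) assms(2) by blast
    then show "L \<in> line_through ` (SIGMA u:X. X - {u})" using uv(2-4) by force
  qed
  then have "card {L \<in> lines N. \<not> generic N X L} \<le> card (line_through ` (SIGMA u:X. X - {u}))"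
    using assms(3) by (intro card_mono) auto
  also have "\<dots> \<le> card (SIGMA u:X. X - {u})" using assms(3) by (intro card_image_le) auto
  finally show ?thesis using card_Sigma_distinct_pairs[OF assms(3)] by simp
qed

lemma card_generic_lines_ge:
  assumes "prime N" "X \<subseteq> Vsp N" "finite X"
  shows "N + 1 \<le> card {L \<in> lines N. generic N X L} + card X * (card X - 1)"
proof -
  have "card (lines N) = card {L \<in> lines N. generic N X L} + card {L \<in> lines N. \<not> generic N X L}"
    using finite_lines by (subst card_Un_disjoint[symmetric]) (auto intro: arg_cong[where f = card])
  then show ?thesis using card_lines[OF assms(1)] card_nongeneric_lines_le[OF assms] by linarith
qed

lemma generic_triples_eq_Sigma:
  "generic_triples N X = (SIGMA L:G. SIGMA M:G - {L}. G - {L, M})"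
  if "G = {L \<in> lines N. generic N X L}"
  unfolding that generic_triples_def by auto

text \<open>An imperfect generic triple \<open>(L, M, M')\<close> is determined by \<open>(L, M)\<close> and the three
  points \<open>a, b, c\<close> of its witness, since \<open>M'\<close> is the unique line whose shift by \<open>c\<close> passes
  through the intersection point of \<open>a + L\<close> and \<open>b + M\<close>.\<close>

lemma card_imperfect_triples_le:
  assumes "prime N" "X \<subseteq> Vsp N" "finite X"
  defines "G \<equiv> {L \<in> lines N. generic N X L}"
  shows "card {(L, M, M') \<in> generic_triples N X. \<not> perfect N X {L, M, M'}}
    \<le> card G * (card G - 1) * (card X * ((card X - 1) * (card X - 2)))"
proof -
  have "finite G" unfolding G_def using finite_lines by simp
  define third where "third L M a b c =
    (SOME K. K \<in> lines N \<and> (\<exists>q. q \<in> shift N L a \<and> q \<in> shift N M b \<and> q \<in> shift N K c))" for L M a b c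
  define code where "code = (\<lambda>((L, M), (a, b, c)). (L, M, third L M a b c))"
  define D where "D = (SIGMA L:G. G - {L}) \<times> (SIGMA a:X. SIGMA b:X - {a}. X - {a, b})"
  have "{(L, M, M') \<in> generic_triples N X. \<not> perfect N X {L, M, M'}} \<subseteq> code ` D"
  proof safe
    fix L M M' assume LMM': "(L, M, M') \<in> generic_triples N X" "\<not> perfect N X {L, M, M'}"
    then have l: "L \<in> lines N" "M \<in> lines N" "M' \<in> lines N" "L \<noteq> M" "L \<noteq> M'" "M \<noteq> M'"
      "generic N X L" "generic N X M" "generic N X M'"
      unfolding generic_triples_def by auto
    obtain a b c p where w: "a \<in> X" "b \<in> X" "c \<in> X" "a \<noteq> b" "a \<noteq> c" "b \<noteq> c" "p \<notin> X"
      "p \<in> shift N L a" "p \<in> shift N M b" "p \<in> shift N M' c"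
      using imperfect_witness[OF assms(1,2) l LMM'(2)] .
    have "M' \<in> lines N \<and> (\<exists>q. q \<in> shift N L a \<and> q \<in> shift N M b \<and> q \<in> shift N M' c)"
      using l w by blast
    then have "third L M a b c \<in> lines N \<and>
        (\<exists>q. q \<in> shift N L a \<and> q \<in> shift N M b \<and> q \<in> shift N (third L M a b c) c)"
      unfolding third_def by (rule someI)
    then have "third L M a b c = M'"
      using imperfect_third_line_unique[OF assms(1,2) l(1,2,4,3) _ w(3,7-10)] by blast
    moreover have "((L, M), (a, b, c)) \<in> D" unfolding D_def G_def using l w by auto
    ultimately show "(L, M, M') \<in> code ` D" unfolding code_def by force
  qed
  moreover have "finite D" unfolding D_def using \<open>finite G\<close> assms(3) by auto
  ultimately have "card {(L, M, M') \<in> generic_triples N X. \<not> perfect N X {L, M, M'}} \<le> card D"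
    using card_mono card_image_le by (metis (no_types, lifting) finite_imageI le_trans)
  also have "card D = card G * (card G - 1) * (card X * ((card X - 1) * (card X - 2)))"
    unfolding D_def card_cartesian_product
    using card_Sigma_distinct_pairs[OF \<open>finite G\<close>] card_Sigma_distinct_triples[OF assms(3)] by simp
  finally show ?thesis .
qed

lemma perfect_prob_ge:
  assumes "card {(L, M, M') \<in> generic_triples N X. \<not> perfect N X {L, M, M'}} \<le> b"
    and "card (generic_triples N X) > 0"
  shows "1 - real b / real (card (generic_triples N X)) \<le> perfect_prob N X"
proof -
  let ?T = "generic_triples N X"
  let ?good = "{(L, M, M') \<in> ?T. perfect N X {L, M, M'}}"
  let ?bad = "{(L, M, M') \<in> ?T. \<not> perfect N X {L, M, M'}}"
  have "finite ?T" using assms(2) card_gt_0_iff by blast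
  have "?T = ?good \<union> ?bad" "?good \<inter> ?bad = {}" by auto
  then have "card ?T = card ?good + card ?bad"
    using \<open>finite ?T\<close> by (metis (no_types, lifting) card_Un_disjoint finite_Un)
  then have "(real (card ?T) - real b) / real (card ?T) \<le> real (card ?good) / real (card ?T)"
    using assms(1) by (intro divide_right_mono) linarith+
  then show ?thesis unfolding perfect_prob_def using assms(2) by (simp add: diff_divide_distrib)
qed

lemma cubic_count_bounds:
  fixes R G n :: real
  assumes "2 \<le> R" "R * (R * (R - 1)) < n" "n + 1 \<le> G + R * (R - 1)"
  shows "3 < G" and "R * (R - 1) * ((R - 2) * n) \<le> R * (R - 1) * (R * (G - 2))"
proof -
  have q1: "2 \<le> R * (R - 1)" using mult_mono[of 2 R 1 "R - 1"] assms(1) by simp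
  have "2 * (R * (R - 1)) \<le> R * (R * (R - 1))" using q1 assms(1) by (intro mult_right_mono) auto
  then show "3 < G" using assms(2,3) q1 by linarith
  have "R \<le> R * (R * (R - 1))" using q1 assms(1) by (simp add: mult_le_cancel_left1)
  moreover have "R * (n - 1 - R * (R - 1)) \<le> R * (G - 2)" using assms(1,3) by (intro mult_left_mono) auto
  ultimately have "(R - 2) * n \<le> R * (G - 2)" using assms(2) by (simp add: algebra_simps)
  then show "R * (R - 1) * ((R - 2) * n) \<le> R * (R - 1) * (R * (G - 2))"
    using q1 by (intro mult_left_mono) auto
qed

text \<open>With \<open>g\<close> generic lines the fraction of imperfect triples is at most
  \<open>r(r-1)(r-2)/(g-2)\<close>, and \<open>g \<ge> N + 1 - r(r-1)\<close> bounds this by \<open>r\<^sup>2(r-1)/N\<close> as long as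
  \<open>r\<^sup>2(r-1) < N\<close>.\<close>

lemma imperfect_ratio_le:
  fixes g r N :: nat
  assumes "2 \<le> N" "real r * (real r ^ 2 - real r) < real N" "N + 1 \<le> g + r * (r - 1)"
  shows "3 \<le> g"
    and "real (g * (g - 1) * (r * ((r - 1) * (r - 2)))) / real (g * ((g - 1) * (g - 2)))
      \<le> real r * (real r ^ 2 - real r) / real N" (is "?ratio \<le> ?bound")
proof -
  consider "r \<le> 1" | "2 \<le> r" by linarith
  then have "3 \<le> g \<and> ?ratio \<le> ?bound"
  proof cases
    case 1
    then have "r * (r - 1) = 0" and r0: "r * ((r - 1) * (r - 2)) = 0" "real r ^ 2 - real r = 0"
      by (auto simp: le_Suc_eq)
    moreover have "3 \<le> g" using assms(1,3) \<open>r * (r - 1) = 0\<close> by linarith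
    ultimately show ?thesis unfolding r0 by simp
  next
    case 2
    define R G n where "R = real r" and "G = real g" and "n = real N"
    have "real (N + 1) \<le> real (g + r * (r - 1))" using assms(3) by (simp only: of_nat_le_iff)
    then have "n + 1 \<le> G + R * (R - 1)" using 2 unfolding R_def G_def n_def by (simp add: of_nat_diff)
    moreover have "R * (R * (R - 1)) < n"
      using assms(2) unfolding R_def n_def by (simp add: power2_eq_square algebra_simps)
    moreover have "2 \<le> R" using 2 unfolding R_def by simp
    ultimately have G3: "3 < G" and "R * (R - 1) * ((R - 2) * n) \<le> R * (R - 1) * (R * (G - 2))"
      using cubic_count_bounds by blast+
    then have "G * (G - 1) * (R * (R - 1) * ((R - 2) * n)) \<le> G * (G - 1) * (R * (R - 1) * (R * (G - 2)))"
      by (intro mult_left_mono[where c = "G * (G - 1)"]) auto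
    moreover have "G * (G - 1) * (R * (R - 1) * ((R - 2) * n)) = G * (G - 1) * (R * ((R - 1) * (R - 2))) * n"
      "G * (G - 1) * (R * (R - 1) * (R * (G - 2))) = R * (R ^ 2 - R) * (G * ((G - 1) * (G - 2)))"
      by (simp_all add: power2_eq_square algebra_simps)
    ultimately have "G * (G - 1) * (R * ((R - 1) * (R - 2))) * n
        \<le> R * (R ^ 2 - R) * (G * ((G - 1) * (G - 2)))" by simp
    moreover have "0 < n" "0 < G * ((G - 1) * (G - 2))" using assms(1) G3 unfolding n_def by auto
    ultimately have "G * (G - 1) * (R * ((R - 1) * (R - 2))) / (G * ((G - 1) * (G - 2)))
        \<le> R * (R ^ 2 - R) / n"
      by (simp only: pos_divide_le_eq pos_le_divide_eq times_divide_eq_left)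
    moreover have "3 \<le> g" using G3 unfolding G_def by simp
    ultimately show ?thesis using 2 unfolding R_def G_def n_def by (simp add: of_nat_diff)
  qed
  then show "3 \<le> g" "?ratio \<le> ?bound" by blast+
qed

theorem mainTheorem3:
  fixes N r :: nat and X :: "(int \<times> int) set"
  assumes "prime N" and "odd N"
    and "X \<subseteq> Vsp N" and "card X = r"
  shows "perfect_prob N X \<ge> 1 - real r * (real r ^ 2 - real r) / real N"
proof (cases "real r * (real r ^ 2 - real r) < real N")
  case True
  have N: "2 \<le> N" using assms(1) by (rule prime_ge_2_nat)
  have X: "finite X" using assms(3) finite_Vsp finite_subset by blast
  define G where "G = {L \<in> lines N. generic N X L}"
  have "finite G" unfolding G_def using finite_lines by simp
  have g: "N + 1 \<le> card G + r * (r - 1)"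
    using card_generic_lines_ge[OF assms(1,3) X] unfolding G_def assms(4) .
  have T: "card (generic_triples N X) = card G * ((card G - 1) * (card G - 2))"
    using card_Sigma_distinct_triples[OF \<open>finite G\<close>] generic_triples_eq_Sigma[OF G_def] by simp
  have "card {(L, M, M') \<in> generic_triples N X. \<not> perfect N X {L, M, M'}}
      \<le> card G * (card G - 1) * (r * ((r - 1) * (r - 2)))"
    using card_imperfect_triples_le[OF assms(1,3) X] unfolding G_def assms(4) .
  moreover have "card (generic_triples N X) > 0"
    unfolding T using imperfect_ratio_le(1)[OF N True g] by simp
  ultimately have "1 - real (card G * (card G - 1) * (r * ((r - 1) * (r - 2))))
      / real (card (generic_triples N X)) \<le> perfect_prob N X"
    by (rule perfect_prob_ge)
  then show ?thesis using imperfect_ratio_le(2)[OF N True g] unfolding T by linarith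
next
  case False
  moreover have "0 < real N" using assms(1) by (simp add: prime_gt_0_nat)
  ultimately have "1 - real r * (real r ^ 2 - real r) / real N \<le> 0" by (simp add: le_divide_eq)
  moreover have "0 \<le> perfect_prob N X" unfolding perfect_prob_def by simp
  ultimately show ?thesis by linarith
qed

end
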